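(* Partially synchronous Streamlet with $n$ validators provides $\frac{1}{3}$-accountable safety with respect to the Streamlet slashing conditions.
   Context: Streamlet: time is divided into epochs, each with a leader. The leader of epoch $e$ proposes a block extending one of the longest notarized chains it has seen; a validator votes (at most once per epoch) for the leader's proposal if it extends one of the longest notarized chains the validator has seen. A block is notarized once it has votes from at least $2n/3$ validators. If a notarized chain contains three adjacent blocks from consecutive epochs $e-1,e,e+1$, then the block of epoch $e$ and its prefix are finalized. For a block $B$, $e_B$ denotes its epoch and $|B|$ its depth. Streamlet slashing conditions: a validator violates a slashing condition if (1) it votes for two blocks $B_1,B_2$ with $e_{B_1}=e_{B_2}$, or (2) it votes for $B_1,B_2$ with $e_{B_1}<e_{B_2}$ but $|B_1|>|B_2|$. A protocol provides $\alpha$-accountable safety if (1) in the case of a safety violation of the produced ledger, at least $\alpha n$ validators can be irrefutably accused, in particular shown to have violated a slashing condition, and (2) honest validators never violate the slashing conditions. *)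

theory Defs
  imports Complex_Main "HOL-Library.Sublist"
begin

text \<open>A block is identified with the chain of (epoch, payload) entries leading to it from
  the genesis block; the genesis block is the empty list. The genesis block has epoch 0; protocol epochs are 1, 2, ...\<close>

type_synonym 'p block = "(nat \<times> 'p) list"

definition genesis :: "'p block" where
  "genesis = []"

definition parent :: "'p block \<Rightarrow> 'p block" where
  "parent B = butlast B"

definition depth :: "'p block \<Rightarrow> nat" where
  "depth B = length B"

definition epoch :: "'p block \<Rightarrow> nat" where
  "epoch B = (if B = [] then 0 else fst (last B))"

definition conflicting :: "'p block \<Rightarrow> 'p block \<Rightarrow> bool" where
  "conflicting B B' \<longleftrightarrow> \<not> prefix B B' \<and> \<not> prefix B' B"

text \<open>V is the set of the n validators, votes is the set of all (signed) votes cast during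
  the execution: (v, B) means validator v voted for block B.\<close>

definition notarized :: "'v set \<Rightarrow> ('v \<times> 'p block) set \<Rightarrow> 'p block \<Rightarrow> bool" where
  "notarized V votes B \<longleftrightarrow> 3 * card {v \<in> V. (v, B) \<in> votes} \<ge> 2 * card V"

definition notarized_chain :: "'v set \<Rightarrow> ('v \<times> 'p block) set \<Rightarrow> 'p block \<Rightarrow> bool" where
  "notarized_chain V votes B \<longleftrightarrow>
     (\<forall>C. prefix C B \<longrightarrow> C \<noteq> genesis \<longrightarrow> notarized V votes C)"

definition finalizing_middle :: "'v set \<Rightarrow> ('v \<times> 'p block) set \<Rightarrow> 'p block \<Rightarrow> bool" where
  "finalizing_middle V votes B \<longleftrightarrow> B \<noteq> genesis \<and>
     (\<exists>C. notarized_chain V votes C \<and> C \<noteq> genesis \<and> parent C = B \<and>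
          epoch (parent B) + 1 = epoch B \<and> epoch B + 1 = epoch C)"

definition finalized :: "'v set \<Rightarrow> ('v \<times> 'p block) set \<Rightarrow> 'p block \<Rightarrow> bool" where
  "finalized V votes B \<longleftrightarrow> (\<exists>M. finalizing_middle V votes M \<and> prefix B M)"

definition safety_violation :: "'v set \<Rightarrow> ('v \<times> 'p block) set \<Rightarrow> bool" where
  "safety_violation V votes \<longleftrightarrow>
     (\<exists>B B'. finalized V votes B \<and> finalized V votes B' \<and> conflicting B B')"

definition violates_slashing :: "('v \<times> 'p block) set \<Rightarrow> 'v \<Rightarrow> bool" where
  "violates_slashing votes v \<longleftrightarrow>
     (\<exists>B1 B2. (v, B1) \<in> votes \<and> (v, B2) \<in> votes \<and> B1 \<noteq> B2 \<and> epoch B1 = epoch B2) \<or>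
     (\<exists>B1 B2. (v, B1) \<in> votes \<and> (v, B2) \<in> votes \<and> epoch B1 < epoch B2 \<and> depth B1 > depth B2)"

text \<open>seen v e is the set of tips of the notarized chains validator v has seen at the moment
  it votes in epoch e (views only grow; arbitrary, partially synchronous message delays are
  allowed). An honest validator votes only for the proposal of the current epoch, at most once
  per epoch, and only if the proposal directly extends one of the longest notarized chains it
  has seen.\<close>

definition honest_validator ::
  "'v set \<Rightarrow> ('v \<times> 'p block) set \<Rightarrow> ('v \<Rightarrow> nat \<Rightarrow> 'p block set) \<Rightarrow> 'v \<Rightarrow> bool" where
  "honest_validator V votes seen v \<longleftrightarrow>
     (\<forall>e. genesis \<in> seen v e \<and> finite (seen v e) \<and>
          (\<forall>C \<in> seen v e. notarized_chain V votes C)) \<and>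
     (\<forall>e e'. e \<le> e' \<longrightarrow> seen v e \<subseteq> seen v e') \<and>
     (\<forall>B. (v, B) \<in> votes \<longrightarrow>
          parent B \<in> seen v (epoch B) \<and>
          (\<forall>C \<in> seen v (epoch B). depth C \<le> depth (parent B))) \<and>
     (\<forall>B B'. (v, B) \<in> votes \<longrightarrow> (v, B') \<in> votes \<longrightarrow> epoch B = epoch B' \<longrightarrow> B = B')"

text \<open>An execution with validator set V (n = card V), honest validators H (the others are
  Byzantine and may vote arbitrarily).\<close>
definition streamlet_execution ::
  "'v set \<Rightarrow> 'v set \<Rightarrow> ('v \<times> 'p block) set \<Rightarrow> ('v \<Rightarrow> nat \<Rightarrow> 'p block set) \<Rightarrow> bool" where
  "streamlet_execution V H votes seen \<longleftrightarrow>
     finite V \<and> H \<subseteq> V \<and>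
     (\<forall>(v, B) \<in> votes. v \<in> V \<and> B \<noteq> genesis \<and> epoch B \<ge> 1) \<and>
     (\<forall>v \<in> H. honest_validator V votes seen v)"

text \<open>alpha-accountable safety for one execution: a safety violation lets us irrefutably
  accuse (from the signed votes) at least alpha * n validators of violating a slashing
  condition, and honest validators never violate the slashing conditions.\<close>
definition accountable_safety :: "real \<Rightarrow> 'v set \<Rightarrow> 'v set \<Rightarrow> ('v \<times> 'p block) set \<Rightarrow> bool" where
  "accountable_safety \<alpha> V H votes \<longleftrightarrow>
     (safety_violation V votes \<longrightarrow> \<alpha> * real (card V) \<le> real (card {v \<in> V. violates_slashing votes v})) \<and>
     (\<forall>v \<in> H. \<not> violates_slashing votes v)"

end

theory Submission
  imports Defs
begin

text \<open>If two notarized blocks form a slashable pair (equal epochs, or the earlier one deeper),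
  their quorums of at least 2n/3 voters share at least n/3 validators, each of whom voted for
  both blocks and is therefore slashable. Otherwise the notarized blocks together with genesis
  have pairwise distinct epochs, and depth is monotone in epoch. Let M be finalized through a
  child C with epochs e, e + 1. A notarized chain reaching an epoch beyond e + 1 has a shortest
  prefix Q doing so, whose parent R has epoch at most e + 1. By uniqueness of epochs R is C or M,
  unless its epoch is at most that of the parent of M; but then monotonicity gives
  depth Q \<le> depth M < depth C \<le> depth Q. So every such chain extends M, and any two
  finalized blocks lie on a common chain. Honest validators vote once per epoch, each time
  extending a longest chain of a growing view, so they never vote for a slashable pair.\<close>

definition slashable_pair :: "'p block \<Rightarrow> 'p block \<Rightarrow> bool" where
  "slashable_pair B1 B2 \<longleftrightarrow>
     (B1 \<noteq> B2 \<and> epoch B1 = epoch B2) \<or> (epoch B1 < epoch B2 \<and> depth B1 > depth B2)"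

definition slashing_free :: "'p block set \<Rightarrow> bool" where
  "slashing_free S \<longleftrightarrow> (\<forall>X \<in> S. \<forall>Y \<in> S. \<not> slashable_pair X Y)"

definition notarized_or_genesis :: "'v set \<Rightarrow> ('v \<times> 'p block) set \<Rightarrow> 'p block set" where
  "notarized_or_genesis V votes = insert genesis {B. notarized V votes B}"

lemma violates_slashing_iff:
  "violates_slashing votes v \<longleftrightarrow>
     (\<exists>B1 B2. (v, B1) \<in> votes \<and> (v, B2) \<in> votes \<and> slashable_pair B1 B2)"
  unfolding violates_slashing_def slashable_pair_def by blast

lemma depth_parent: "B \<noteq> genesis \<Longrightarrow> depth B = depth (parent B) + 1"
  by (simp add: depth_def parent_def genesis_def)

lemma epoch_genesis [simp]: "epoch genesis = 0"
  by (simp add: epoch_def genesis_def)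

lemma depth_genesis [simp]: "depth genesis = 0"
  by (simp add: depth_def genesis_def)

lemma prefix_parent: "prefix (parent B) B"
  unfolding parent_def by (rule prefixeq_butlast)

lemma slashing_free_epoch_inj:
  assumes "slashing_free S" "X \<in> S" "Y \<in> S" "epoch X = epoch Y"
  shows "X = Y"
  using assms unfolding slashing_free_def slashable_pair_def by blast

lemma slashing_free_depth_mono:
  assumes "slashing_free S" "X \<in> S" "Y \<in> S" "epoch X \<le> epoch Y"
  shows "depth X \<le> depth Y"
proof (cases "epoch X = epoch Y")
  case True
  then show ?thesis using slashing_free_epoch_inj[OF assms(1-3)] by simp
next
  case False
  then show ?thesis using assms unfolding slashing_free_def slashable_pair_def by force
qed

lemma prefix_minimal_crossing:
  assumes "P xs" "\<not> P []"
  obtains ys where "prefix ys xs" "ys \<noteq> []" "P ys" "\<not> P (butlast ys)"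
  using assms
proof (induction xs rule: rev_induct)
  case Nil
  then show ?case by simp
next
  case (snoc x xs)
  show ?case
  proof (cases "P xs")
    case True
    then show ?thesis
      using snoc.IH snoc.prems(1,3) by (meson prefix_order.trans prefix_append)
  next
    case False
    show ?thesis
      by (rule snoc.prems(1)[of "xs @ [x]"]) (simp_all add: False snoc.prems(2))
  qed
qed

lemma slashing_free_chain_extends_middle:
  assumes free: "slashing_free S"
    and chain: "\<And>X. prefix X C \<Longrightarrow> X \<in> S" and chain': "\<And>X. prefix X C' \<Longrightarrow> X \<in> S"
    and middle: "parent C = M" "epoch (parent M) + 1 = epoch M" "epoch M + 1 = epoch C"
    and later: "epoch C < epoch C'"
  shows "prefix M C'"
proof -
  have "M \<noteq> genesis" "C \<noteq> genesis"
    using middle by (auto simp: parent_def genesis_def epoch_def)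
  then have depth_C: "depth C = depth (parent M) + 2"
    using depth_parent[of C] depth_parent[of M] middle(1) by simp
  have prefixes_C: "prefix (parent M) C" "prefix M C"
    using prefix_parent middle(1) prefix_order.trans by metis+
  obtain Q where Q: "prefix Q C'" "Q \<noteq> []" "epoch C < epoch Q" "\<not> epoch C < epoch (parent Q)"
    using prefix_minimal_crossing[of "\<lambda>Q. epoch C < epoch Q" C'] later
    unfolding parent_def by (auto simp: epoch_def)
  define R where "R = parent Q"
  have R_prefix: "prefix R C'"
    unfolding R_def using Q(1) prefix_parent prefix_order.trans by blast
  have in_S: "R \<in> S" "C \<in> S" "M \<in> S" "parent M \<in> S"
    using chain chain' R_prefix prefixes_C by auto
  consider "epoch R = epoch C" | "epoch R = epoch M" | "epoch R \<le> epoch (parent M)"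
    using Q(4) middle(2,3) unfolding R_def by linarith
  then show ?thesis
  proof cases
    case 1
    then have "R = C" using slashing_free_epoch_inj[OF free in_S(1,2)] by simp
    then show ?thesis using R_prefix prefixes_C(2) prefix_order.trans by blast
  next
    case 2
    then show ?thesis using slashing_free_epoch_inj[OF free in_S(1,3)] R_prefix by simp
  next
    case 3
    have "depth R \<le> depth (parent M)"
      using slashing_free_depth_mono[OF free in_S(1,4) 3] .
    moreover have "depth C \<le> depth Q"
      using slashing_free_depth_mono[OF free in_S(2)] chain' Q(1,3) by simp
    moreover have "depth Q = depth R + 1"
      using depth_parent Q(2) unfolding R_def genesis_def by blast
    ultimately show ?thesis using depth_C by simp
  qed
qed

lemma notarized_chain_prefix_mem:
  assumes "notarized_chain V votes C" "prefix X C"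
  shows "X \<in> notarized_or_genesis V votes"
  using assms unfolding notarized_chain_def notarized_or_genesis_def by auto

lemma finalizing_middles_prefix_compatible:
  assumes free: "slashing_free (notarized_or_genesis V votes)"
    and M1: "finalizing_middle V votes M1" and M2: "finalizing_middle V votes M2"
    and le: "epoch M1 \<le> epoch M2"
  shows "prefix M1 M2 \<or> prefix M2 M1"
proof -
  obtain C1 where C1: "notarized_chain V votes C1" "parent C1 = M1"
      "epoch (parent M1) + 1 = epoch M1" "epoch M1 + 1 = epoch C1"
    using M1 unfolding finalizing_middle_def by blast
  obtain C2 where C2: "notarized_chain V votes C2" "parent C2 = M2" "epoch M2 + 1 = epoch C2"
    using M2 unfolding finalizing_middle_def by blast
  have M2_prefix: "prefix M2 C2" using C2(2) prefix_parent by blast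
  show ?thesis
  proof (cases "epoch M1 = epoch M2")
    case True
    have "M1 \<in> notarized_or_genesis V votes" "M2 \<in> notarized_or_genesis V votes"
      using notarized_chain_prefix_mem C1(1,2) C2(1) M2_prefix prefix_parent by blast+
    then show ?thesis using slashing_free_epoch_inj[OF free] True by blast
  next
    case False
    have "epoch C1 < epoch C2" using le False C1(4) C2(3) by simp
    then have "prefix M1 C2"
      using slashing_free_chain_extends_middle[OF free _ _ C1(2-4), of C2]
        notarized_chain_prefix_mem[OF C1(1)] notarized_chain_prefix_mem[OF C2(1)] by blast
    then show ?thesis using M2_prefix prefix_same_cases by blast
  qed
qed

lemma slashing_free_no_safety_violation:
  assumes "slashing_free (notarized_or_genesis V votes)"
  shows "\<not> safety_violation V votes"
proof
  assume "safety_violation V votes"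
  then obtain B1 B2 M1 M2 where
    B: "conflicting B1 B2" "prefix B1 M1" "prefix B2 M2" and
    M: "finalizing_middle V votes M1" "finalizing_middle V votes M2"
    unfolding safety_violation_def finalized_def by blast
  have "prefix M1 M2 \<or> prefix M2 M1"
    using finalizing_middles_prefix_compatible[OF assms] M by (metis nat_le_linear)
  then have "prefix B1 M2 \<or> prefix B2 M1"
    using B(2,3) prefix_order.trans by blast
  then have "prefix B1 B2 \<or> prefix B2 B1"
    using B(2,3) prefix_same_cases by blast
  with B(1) show False unfolding conflicting_def by blast
qed

lemma card_common_voters:
  assumes "finite V" "notarized V votes X" "notarized V votes Y"
  shows "card V \<le> 3 * card {v \<in> V. (v, X) \<in> votes \<and> (v, Y) \<in> votes}"
proof -
  let ?A = "{v \<in> V. (v, X) \<in> votes}" and ?B = "{v \<in> V. (v, Y) \<in> votes}"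
  have "card ?A + card ?B = card (?A \<union> ?B) + card (?A \<inter> ?B)"
    using assms(1) by (intro card_Un_Int) auto
  moreover have "card (?A \<union> ?B) \<le> card V"
    using assms(1) by (intro card_mono) auto
  ultimately have "card V \<le> 3 * card (?A \<inter> ?B)"
    using assms(2,3) unfolding notarized_def by linarith
  moreover have "?A \<inter> ?B = {v \<in> V. (v, X) \<in> votes \<and> (v, Y) \<in> votes}" by auto
  ultimately show ?thesis by simp
qed

lemma notarized_epoch_pos:
  assumes "card V > 0" "notarized V votes X" "\<forall>(v, B) \<in> votes. epoch B \<ge> 1"
  shows "epoch X \<ge> 1"
proof -
  have "{v \<in> V. (v, X) \<in> votes} \<noteq> {}"
    using assms(1,2) unfolding notarized_def by (intro notI) simp
  then show ?thesis using assms(3) by auto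
qed

lemma card_slashable_if_not_slashing_free:
  assumes "finite V" "\<forall>(v, B) \<in> votes. epoch B \<ge> 1"
    and "\<not> slashing_free (notarized_or_genesis V votes)"
  shows "card V \<le> 3 * card {v \<in> V. violates_slashing votes v}"
proof (cases "card V = 0")
  case False
  obtain X Y where XY: "X \<in> notarized_or_genesis V votes" "Y \<in> notarized_or_genesis V votes"
      "slashable_pair X Y"
    using assms(3) unfolding slashing_free_def by blast
  have "X \<noteq> genesis \<and> Y \<noteq> genesis"
  proof (rule ccontr)
    assume "\<not> (X \<noteq> genesis \<and> Y \<noteq> genesis)"
    then obtain Z where Z: "Z \<in> notarized_or_genesis V votes" "Z \<noteq> genesis" "epoch Z = 0"
      using XY by (auto simp: slashable_pair_def)
    then have "notarized V votes Z" unfolding notarized_or_genesis_def by simp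
    then have "epoch Z \<ge> 1" using notarized_epoch_pos assms(2) False by blast
    with Z(3) show False by simp
  qed
  then have "notarized V votes X" "notarized V votes Y"
    using XY(1,2) unfolding notarized_or_genesis_def by auto
  then have "card V \<le> 3 * card {v \<in> V. (v, X) \<in> votes \<and> (v, Y) \<in> votes}"
    using card_common_voters assms(1) by blast
  also have "\<dots> \<le> 3 * card {v \<in> V. violates_slashing votes v}"
    using assms(1) XY(3) by (auto intro!: card_mono simp: violates_slashing_iff)
  finally show ?thesis .
qed simp

lemma honest_validator_not_violates_slashing:
  assumes honest: "honest_validator V votes seen v"
    and no_genesis_votes: "\<forall>(v, B) \<in> votes. B \<noteq> genesis"
  shows "\<not> violates_slashing votes v"
proof -
  have "\<not> slashable_pair B1 B2" if votes: "(v, B1) \<in> votes" "(v, B2) \<in> votes" for B1 B2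
  proof -
    have "B1 = B2" if "epoch B1 = epoch B2"
      using honest votes that unfolding honest_validator_def by blast
    moreover have "depth B1 \<le> depth B2" if "epoch B1 < epoch B2"
    proof -
      have "parent B1 \<in> seen v (epoch B2)"
        using honest votes(1) that unfolding honest_validator_def by (meson less_imp_le subsetD)
      then have "depth (parent B1) \<le> depth (parent B2)"
        using honest votes(2) unfolding honest_validator_def by blast
      moreover have "B1 \<noteq> genesis" "B2 \<noteq> genesis" using no_genesis_votes votes by auto
      ultimately show ?thesis using depth_parent[of B1] depth_parent[of B2] by simp
    qed
    ultimately show ?thesis unfolding slashable_pair_def by auto
  qed
  then show ?thesis unfolding violates_slashing_iff by blast
qed

theorem theorem2:
  fixes V H :: "'v set" and votes :: "('v \<times> 'p block) set"
    and seen :: "'v \<Rightarrow> nat \<Rightarrow> 'p block set"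
  assumes "streamlet_execution V H votes seen"
  shows "accountable_safety (1/3) V H votes"
proof -
  have fin: "finite V"
    and votes_ok: "\<forall>(v, B) \<in> votes. B \<noteq> genesis" "\<forall>(v, B) \<in> votes. epoch B \<ge> 1"
    and honest: "\<forall>v \<in> H. honest_validator V votes seen v"
    using assms unfolding streamlet_execution_def by auto
  have "1/3 * real (card V) \<le> real (card {v \<in> V. violates_slashing votes v})"
    if "safety_violation V votes"
  proof -
    have "card V \<le> 3 * card {v \<in> V. violates_slashing votes v}"
      using card_slashable_if_not_slashing_free[OF fin votes_ok(2)]
        slashing_free_no_safety_violation that by blast
    then show ?thesis by linarith
  qed
  moreover have "\<forall>v \<in> H. \<not> violates_slashing votes v"
    using honest honest_validator_not_violates_slashing[OF _ votes_ok(1)] by blast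
  ultimately show ?thesis unfolding accountable_safety_def by blast
qed

end
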